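(* For each positive integer $N$, consider a lattice system with Hilbert space $\mathcal{H}^{(N)}=\bigotimes_{i=1}^N\mathcal{H}_i$, $\dim\mathcal{H}_i=d\ge2$ (so $D=d^N$), equipped with self-adjoint $\hat H^{(N)},\hat H'^{(N)}$, a density operator $\hat\rho^{0,(N)}$ and a unitary $\hat V^{(N)}$, such that: (A) the spectra $\{E_n\}$ of $\hat H^{(N)}$ and $\{E'_n\}$ of $\hat H'^{(N)}$ are non-degenerate; (B) if $E_k-E_l=E_m-E_n\ne0$ then $k=m$, $l=n$, and likewise for $\{E'_n\}$; and the effective dimension $D_{\mathrm{eff}}=\bigl[\sum_n(\rho^0_{nn})^2\bigr]^{-1}$ is exponentially large in $N$: there is $c>0$ with $D_{\mathrm{eff}}\ge e^{cN}$ for all $N$. Then the initial diagonal entropy $S_0$ and the time-averaged diagonal entropy after the operation $\overline{S'(\tau)}$ satisfy $S_0\lesssim\overline{S'(\tau)}$, i.e. $$\limsup_{N\to\infty}\frac{S_0-\overline{S'(\tau)}}{N}\le 0 .$$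
   Context: With $\{|E_n\rangle\}$, $\{|E'_n\rangle\}$ the eigenbases of $\hat H^{(N)},\hat H'^{(N)}$, $\rho^0_{kl}=\langle E_k|\hat\rho^{0,(N)}|E_l\rangle$, $U_{mn}=\langle E'_m|\hat V^{(N)}|E_n\rangle$, $\hbar>0$: $\rho'_{nn}(\tau)=\sum_{k,l}U_{nk}U_{nl}^*e^{-\mathrm{i}(E_k-E_l)\tau/\hbar}\rho^0_{kl}$, $S_0=-\sum_n\rho^0_{nn}\ln\rho^0_{nn}$, $S'(\tau)=-\sum_n\rho'_{nn}(\tau)\ln\rho'_{nn}(\tau)$ (convention $0\ln0=0$), and $\overline{F(\tau)}=\lim_{T\to\infty}T^{-1}\int_0^TF(\tau)d\tau$. The notation $\lesssim$ means $\le$ with terms sub-leading in $N$ ignored. *)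

theory Defs
  imports "HOL-Analysis.Analysis"
begin

text \<open>Finite-dimensional Hilbert space C^D, vectors as nat => complex (indices < D),
  operators as D x D matrices nat => nat => complex (indices < D).\<close>

type_synonym cvec = "nat \<Rightarrow> complex"
type_synonym cmat = "nat \<Rightarrow> nat \<Rightarrow> complex"

definition cinner :: "nat \<Rightarrow> cvec \<Rightarrow> cvec \<Rightarrow> complex" where
  "cinner D u v = (\<Sum>i<D. cnj (u i) * v i)"

definition mvec :: "nat \<Rightarrow> cmat \<Rightarrow> cvec \<Rightarrow> cvec" where
  "mvec D A v = (\<lambda>i. \<Sum>j<D. A i j * v j)"

definition self_adjoint :: "nat \<Rightarrow> cmat \<Rightarrow> bool" where
  "self_adjoint D A \<longleftrightarrow> (\<forall>i<D. \<forall>j<D. A j i = cnj (A i j))"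

definition unitary_mat :: "nat \<Rightarrow> cmat \<Rightarrow> bool" where
  "unitary_mat D A \<longleftrightarrow>
     (\<forall>i<D. \<forall>j<D. (\<Sum>k<D. cnj (A k i) * A k j) = (if i = j then 1 else 0)) \<and>
     (\<forall>i<D. \<forall>j<D. (\<Sum>k<D. A i k * cnj (A j k)) = (if i = j then 1 else 0))"

definition density_op :: "nat \<Rightarrow> cmat \<Rightarrow> bool" where
  "density_op D \<rho> \<longleftrightarrow> self_adjoint D \<rho> \<and>
     (\<forall>v. 0 \<le> Re (cinner D v (mvec D \<rho> v))) \<and>
     (\<Sum>i<D. \<rho> i i) = 1"

definition eigenbasis :: "nat \<Rightarrow> cmat \<Rightarrow> (nat \<Rightarrow> cvec) \<Rightarrow> (nat \<Rightarrow> real) \<Rightarrow> bool" where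
  "eigenbasis D A e E \<longleftrightarrow>
     (\<forall>m<D. \<forall>n<D. cinner D (e m) (e n) = (if m = n then 1 else 0)) \<and>
     (\<forall>n<D. mvec D A (e n) = (\<lambda>i. complex_of_real (E n) * e n i))"

definition melem :: "nat \<Rightarrow> cvec \<Rightarrow> cmat \<Rightarrow> cvec \<Rightarrow> complex" where
  "melem D u A v = cinner D u (mvec D A v)"

definition nondegenerate :: "nat \<Rightarrow> (nat \<Rightarrow> real) \<Rightarrow> bool" where
  "nondegenerate D E \<longleftrightarrow> inj_on E {..<D}"

definition nondegenerate_gaps :: "nat \<Rightarrow> (nat \<Rightarrow> real) \<Rightarrow> bool" where
  "nondegenerate_gaps D E \<longleftrightarrow>
     (\<forall>k<D. \<forall>l<D. \<forall>m<D. \<forall>n<D.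
        E k - E l = E m - E n \<and> E k - E l \<noteq> 0 \<longrightarrow> k = m \<and> l = n)"

text \<open>Shannon entropy of the diagonal p_0..p_{D-1}, with 0 ln 0 = 0
  (automatic since ln 0 = 0 in Isabelle).\<close>
definition diag_entropy :: "nat \<Rightarrow> (nat \<Rightarrow> real) \<Rightarrow> real" where
  "diag_entropy D p = - (\<Sum>n<D. p n * ln (p n))"

definition time_avg :: "(real \<Rightarrow> real) \<Rightarrow> real" where
  "time_avg F = Lim at_top (\<lambda>T. integral {0..T} F / T)"

end

theory Submission
  imports Defs "Jordan_Normal_Form.Determinant" "HOL-Real_Asymp.Real_Asymp"
begin

text \<open>For every \<open>N\<close> the deficit \<open>S\<^sub>0 - \<langle>S'\<rangle>\<close> is at most \<open>1\<close>, so it vanishes after division by \<open>N\<close>. Write \<open>p\<^sub>n(\<tau>) = \<rho>'\<^sub>n\<^sub>n(\<tau>)\<close>, a real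
  trigonometric polynomial in \<open>\<tau>\<close>, and \<open>q\<^sub>n = \<Sum>\<^sub>k |U\<^sub>n\<^sub>k|\<^sup>2 \<rho>\<^sup>0\<^sub>k\<^sub>k\<close> for its time average. Since the
  gaps of \<open>H\<close> are non-degenerate, the time average of \<open>p\<^sub>n\<^sup>2\<close> is \<open>q\<^sub>n\<^sup>2\<close> plus the off-diagonal weight
  \<open>\<Sum>\<^bsub>k \<noteq> l\<^esub> |U\<^sub>n\<^sub>k U\<^sub>n\<^sub>l \<rho>\<^sup>0\<^sub>k\<^sub>l|\<^sup>2\<close>, which positivity of \<open>\<rho>\<^sup>0\<close> bounds by \<open>q\<^sub>n\<^sup>2\<close>. The parabola
  \<open>y ln y \<le> (ln q - 1) y + y\<^sup>2/q\<close> then averages to \<open>\<langle>p\<^sub>n ln p\<^sub>n\<rangle> \<le> q\<^sub>n ln q\<^sub>n + q\<^sub>n\<close>. Finally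
  \<open>q = W p\<^sup>0\<close> for the doubly stochastic matrix \<open>W\<^sub>n\<^sub>k = |U\<^sub>n\<^sub>k|\<^sup>2\<close>, so Jensen's inequality for \<open>y ln y\<close>
  gives \<open>-\<Sum> q\<^sub>n ln q\<^sub>n \<ge> S\<^sub>0\<close>, while \<open>\<Sum> q\<^sub>n = 1\<close>. That the time average of \<open>S'\<close> exists at all follows by
  approximating \<open>y ln y\<close> uniformly by polynomials on the range of \<open>p\<^sub>n\<close>.\<close>

section \<open>Time averages\<close>

definition has_time_mean :: "(real \<Rightarrow> 'a::real_normed_vector) \<Rightarrow> 'a \<Rightarrow> bool" where
  "has_time_mean F m \<longleftrightarrow> ((\<lambda>T. integral {0..T} F /\<^sub>R T) \<longlongrightarrow> m) at_top"

lemma time_avg_eqI: "has_time_mean F m \<Longrightarrow> time_avg F = m"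
  unfolding has_time_mean_def time_avg_def by (simp add: tendsto_Lim divide_inverse_commute)

lemma continuous_on_UNIV_integrable:
  fixes f :: "real \<Rightarrow> 'a::banach"
  shows "continuous_on UNIV f \<Longrightarrow> f integrable_on {a..b}"
  by (rule integrable_continuous_real[OF continuous_on_subset]) auto

lemma has_time_mean_const: "has_time_mean (\<lambda>t. c) c"
proof -
  have "\<forall>\<^sub>F T in at_top. c = integral {0..T} (\<lambda>t. c) /\<^sub>R T"
    using eventually_gt_at_top[of "0::real"] by eventually_elim simp
  then show ?thesis
    unfolding has_time_mean_def by (rule Lim_transform_eventually[OF tendsto_const])
qed

lemma has_time_mean_add:
  fixes F G :: "real \<Rightarrow> 'a::banach"
  assumes "continuous_on UNIV F" "continuous_on UNIV G" "has_time_mean F a" "has_time_mean G b"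
  shows "has_time_mean (\<lambda>t. F t + G t) (a + b)"
proof -
  have "integral {0..T} (\<lambda>t. F t + G t) = integral {0..T} F + integral {0..T} G" for T
    using assms(1,2) by (intro integral_add continuous_on_UNIV_integrable)
  with assms(3,4) show ?thesis
    unfolding has_time_mean_def by (simp add: tendsto_add scaleR_right_distrib)
qed

lemma has_time_mean_sum:
  fixes F :: "'i \<Rightarrow> real \<Rightarrow> 'a::banach"
  assumes "finite I" "\<And>i. i \<in> I \<Longrightarrow> continuous_on UNIV (F i)"
    "\<And>i. i \<in> I \<Longrightarrow> has_time_mean (F i) (m i)"
  shows "has_time_mean (\<lambda>t. \<Sum>i\<in>I. F i t) (\<Sum>i\<in>I. m i)"
  using assms
proof (induction I rule: finite_induct)
  case empty
  then show ?case using has_time_mean_const[of 0] by simp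
next
  case (insert i I)
  then show ?case
    by (simp, intro has_time_mean_add continuous_on_sum) auto
qed

lemma has_time_mean_mult_left:
  fixes F :: "real \<Rightarrow> 'a::real_normed_field"
  assumes "has_time_mean F m"
  shows "has_time_mean (\<lambda>t. c * F t) (c * m)"
proof -
  have "c * integral {0..T} F /\<^sub>R T = c * (integral {0..T} F /\<^sub>R T)" for T
    by simp
  with tendsto_mult_left[OF assms[unfolded has_time_mean_def]] show ?thesis
    unfolding has_time_mean_def by simp
qed

lemma has_time_mean_bounded_linear:
  fixes F :: "real \<Rightarrow> 'a::banach"
  assumes f: "bounded_linear f" and "continuous_on UNIV F" "has_time_mean F m"
  shows "has_time_mean (\<lambda>t. f (F t)) (f m)"
proof -
  have "integral {0..T} (\<lambda>t. f (F t)) /\<^sub>R T = f (integral {0..T} F /\<^sub>R T)" for T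
    using integral_linear[OF continuous_on_UNIV_integrable[OF assms(2)] f, of 0 T]
    by (simp add: o_def linear_scale[OF bounded_linear.linear[OF f]])
  with bounded_linear.tendsto[OF f assms(3)[unfolded has_time_mean_def]] show ?thesis
    unfolding has_time_mean_def by simp
qed

lemma has_time_mean_le:
  fixes f g :: "real \<Rightarrow> real"
  assumes "continuous_on UNIV f" "continuous_on UNIV g" "has_time_mean f a" "has_time_mean g b"
    and "\<And>t. t \<ge> 0 \<Longrightarrow> f t \<le> g t"
  shows "a \<le> b"
proof -
  have "\<forall>\<^sub>F T in at_top. integral {0..T} f /\<^sub>R T \<le> integral {0..T} g /\<^sub>R T"
    using eventually_gt_at_top[of "0::real"]
  proof eventually_elim
    case (elim T)
    have "integral {0..T} f \<le> integral {0..T} g"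
      using assms(1,2,5) by (intro integral_le continuous_on_UNIV_integrable) auto
    with elim show ?case by (simp add: divide_right_mono divide_inverse_commute[symmetric])
  qed
  with assms(3,4) show ?thesis
    unfolding has_time_mean_def by (intro tendsto_le[of at_top]) auto
qed

lemma has_time_mean_exp:
  assumes "w \<noteq> 0"
  shows "has_time_mean (\<lambda>t. exp (\<i> * of_real (w * t))) 0"
proof -
  define P where "P t = exp (\<i> * of_real (w * t)) / (\<i> * of_real w)" for t
  have "((\<lambda>z. exp (\<i> * (of_real w * z)) / (\<i> * of_real w)) has_field_derivative
          exp (\<i> * of_real (w * t))) (at (of_real t))" for t
    using assms by (auto intro!: derivative_eq_intros simp: algebra_simps)
  then have deriv: "(P has_vector_derivative exp (\<i> * of_real (w * t))) (at t within X)" for t X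
    using has_vector_derivative_real_field unfolding P_def by fastforce
  have integral: "integral {0..T} (\<lambda>t. exp (\<i> * of_real (w * t))) = P T - P 0" if "T \<ge> 0" for T
    by (rule integral_unique, rule fundamental_theorem_of_calculus[OF that deriv])
  have bound: "norm (P T - P 0) \<le> 2 / \<bar>w\<bar>" for T
    using norm_triangle_ineq4[of "P T" "P 0"] by (simp add: P_def norm_divide norm_mult)
  have "\<forall>\<^sub>F T in at_top.
      norm (integral {0..T} (\<lambda>t. exp (\<i> * of_real (w * t))) /\<^sub>R T) \<le> (2 / \<bar>w\<bar>) / T"
    using eventually_gt_at_top[of "0::real"]
  proof eventually_elim
    case (elim T)
    have "norm (integral {0..T} (\<lambda>t. exp (\<i> * of_real (w * t))) /\<^sub>R T) = norm (P T - P 0) / T"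
      unfolding integral[OF less_imp_le[OF elim]] using elim by (simp add: divide_inverse_commute)
    also have "\<dots> \<le> (2 / \<bar>w\<bar>) / T"
      using elim by (intro divide_right_mono bound) simp
    finally show ?case .
  qed
  moreover have "((\<lambda>T::real. (2 / \<bar>w\<bar>) / T) \<longlongrightarrow> 0) at_top"
    by real_asymp
  ultimately show ?thesis
    unfolding has_time_mean_def by (rule Lim_null_comparison)
qed

lemma has_time_mean_uniform_approx:
  fixes f :: "real \<Rightarrow> 'a::banach"
  assumes f: "continuous_on UNIV f"
    and approx: "\<And>e. e > 0 \<Longrightarrow> \<exists>g m. continuous_on UNIV g \<and> has_time_mean g m \<and>
                                    (\<forall>t\<ge>0. dist (f t) (g t) \<le> e)"
  shows "\<exists>m. has_time_mean f m"
proof -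
  define avg where "avg h T = integral {0..T} h /\<^sub>R T" for h :: "real \<Rightarrow> 'a" and T
  obtain g M where g: "\<And>j. continuous_on UNIV (g j)" "\<And>j. has_time_mean (g j) (M j)"
      and close: "\<And>j t. t \<ge> 0 \<Longrightarrow> dist (f t) (g j t) \<le> inverse (Suc j)"
  proof -
    define good where "good j g m \<longleftrightarrow> continuous_on UNIV g \<and> has_time_mean g m \<and>
                                    (\<forall>t\<ge>0. dist (f t) (g t) \<le> inverse (Suc j))"
      for j g m
    have "\<forall>j. \<exists>gm. good j (fst gm) (snd gm)"
      using approx by (simp add: good_def)
    then have "\<exists>gm. \<forall>j. good j (fst (gm j)) (snd (gm j))"
      by (rule choice)
    then obtain gm where "\<forall>j. good j (fst (gm j)) (snd (gm j))"
      by blast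
    then show ?thesis
      using that[of "\<lambda>j. fst (gm j)" "\<lambda>j. snd (gm j)"] unfolding good_def by blast
  qed
  have avg_close: "dist (avg f T) (avg (g j) T) \<le> inverse (Suc j)" if "T > 0" for T j
  proof -
    have "continuous_on {0..T} f" "continuous_on {0..T} (g j)"
      using f g(1) continuous_on_subset by blast+
    then have "continuous_on {0..T} (\<lambda>t. f t - g j t)"
      by (intro continuous_intros)
    then have "norm (integral {0..T} (\<lambda>t. f t - g j t)) \<le> inverse (Suc j) * (T - 0)"
      using that close by (intro integral_bound) (auto simp: dist_norm)
    moreover have "integral {0..T} (\<lambda>t. f t - g j t) = integral {0..T} f - integral {0..T} (g j)"
      using f g(1) by (intro integral_diff continuous_on_UNIV_integrable)
    moreover have "avg f T - avg (g j) T = (integral {0..T} f - integral {0..T} (g j)) /\<^sub>R T"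
      by (simp add: avg_def scaleR_diff_right)
    ultimately show ?thesis
      using that by (simp add: dist_norm divide_inverse_commute[symmetric] divide_le_eq)
  qed
  have M_close: "dist (M i) (M j) \<le> inverse (Suc i) + inverse (Suc j)" for i j
  proof (rule tendsto_le[of at_top])
    show "((\<lambda>T. dist (avg (g i) T) (avg (g j) T)) \<longlongrightarrow> dist (M i) (M j)) at_top"
      using g(2)[of i] g(2)[of j] unfolding has_time_mean_def avg_def by (intro tendsto_dist)
    show "\<forall>\<^sub>F T in at_top. dist (avg (g i) T) (avg (g j) T) \<le> inverse (Suc i) + inverse (Suc j)"
      using eventually_gt_at_top[of "0::real"]
    proof eventually_elim
      case (elim T)
      then show ?case
        using avg_close[OF elim, of i] avg_close[OF elim, of j]
          dist_triangle3[of "avg (g i) T" "avg (g j) T" "avg f T"]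
        by linarith
    qed
  qed (auto intro: tendsto_const)
  have "Cauchy M"
  proof (rule metric_CauchyI)
    fix e :: real assume "e > 0"
    then obtain N :: nat where N: "inverse (Suc N) < e / 2"
      using reals_Archimedean[of "e / 2"] by auto
    have "dist (M m) (M n) < e" if "m \<ge> N" "n \<ge> N" for m n
    proof -
      have "inverse (Suc m) \<le> inverse (Suc N)" "inverse (Suc n) \<le> inverse (Suc N)"
        using that by (auto intro!: le_imp_inverse_le)
      then show ?thesis using M_close[of m n] N by linarith
    qed
    then show "\<exists>N. \<forall>m\<ge>N. \<forall>n\<ge>N. dist (M m) (M n) < e" by blast
  qed
  then obtain m where M: "M \<longlonglongrightarrow> m"
    using Cauchy_convergent_iff convergent_def by blast
  have uniform: "uniform_limit {0<..} (\<lambda>j. avg (g j)) (avg f) sequentially"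
  proof (rule uniform_limitI)
    fix e :: real assume "e > 0"
    with LIMSEQ_inverse_real_of_nat have "\<forall>\<^sub>F j in sequentially. inverse (Suc j) < e"
      by (rule order_tendstoD(2))
    then show "\<forall>\<^sub>F j in sequentially. \<forall>T\<in>{0<..}. dist (avg (g j) T) (avg f T) < e"
    proof eventually_elim
      case (elim j)
      have "dist (avg (g j) T) (avg f T) < e" if "T > 0" for T
        using avg_close[OF that, of j] elim by (simp add: dist_commute)
      then show ?case by simp
    qed
  qed
  have "\<forall>\<^sub>F j in sequentially. (avg (g j) \<longlongrightarrow> M j) at_top"
    using g(2) unfolding has_time_mean_def avg_def by simp
  then have "(avg f \<longlongrightarrow> m) at_top"
    by (rule swap_uniform_limit'[OF _ M uniform]) (simp_all add: eventually_gt_at_top)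
  then show ?thesis unfolding has_time_mean_def avg_def by blast
qed

section \<open>Trigonometric polynomials\<close>

lemma has_time_mean_exp_term:
  "has_time_mean (\<lambda>t. c * exp (\<i> * of_real (w * t))) (if w = 0 then c else 0)"
  using has_time_mean_const[of c] has_time_mean_mult_left[OF has_time_mean_exp, of w c] by auto

lemma has_time_mean_exp_sum:
  assumes "finite I"
  shows "has_time_mean (\<lambda>t. \<Sum>i\<in>I. c i * exp (\<i> * of_real (w i * t)))
           (\<Sum>i\<in>I. if w i = 0 then c i else 0)"
  using assms by (intro has_time_mean_sum has_time_mean_exp_term continuous_intros) auto

lemma sum_sum_if_eq_class:
  assumes "finite I" "Z \<subseteq> I"
    and classes: "\<And>i j. i \<in> I \<Longrightarrow> j \<in> I \<Longrightarrow> w i = w j \<longleftrightarrow> i = j \<or> (i \<in> Z \<and> j \<in> Z)"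
  shows "(\<Sum>i\<in>I. \<Sum>j\<in>I. if w i = w j then f i j else 0)
           = (\<Sum>i\<in>Z. \<Sum>j\<in>Z. f i j) + (\<Sum>i\<in>I - Z. f i i)"
proof -
  have "(\<Sum>j\<in>I. if w i = w j then f i j else 0) = (\<Sum>j\<in>Z. f i j)" if "i \<in> Z" for i
  proof -
    have "(\<Sum>j\<in>I. if w i = w j then f i j else 0) = (\<Sum>j\<in>I. if j \<in> Z then f i j else 0)"
      using that assms(2) by (intro sum.cong refl) (auto simp: classes)
    also have "\<dots> = (\<Sum>j\<in>Z. f i j)"
      using assms(1,2) by (simp add: sum.inter_restrict[symmetric] Int_absorb1)
    finally show ?thesis .
  qed
  moreover have "(\<Sum>j\<in>I. if w i = w j then f i j else 0) = f i i" if "i \<in> I - Z" for i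
  proof -
    have "(\<Sum>j\<in>I. if w i = w j then f i j else 0) = (\<Sum>j\<in>I. if i = j then f i j else 0)"
      using that by (intro sum.cong refl) (auto simp: classes)
    then show ?thesis
      using that assms(1) by simp
  qed
  ultimately show ?thesis
    using assms(1,2) by (simp add: sum.subset_diff[of Z I] add.commute)
qed

lemma has_time_mean_exp_sum_norm_sq:
  assumes "finite I"
  shows "has_time_mean
           (\<lambda>t. (\<Sum>i\<in>I. c i * exp (\<i> * of_real (w i * t))) * cnj (\<Sum>i\<in>I. c i * exp (\<i> * of_real (w i * t))))
           (\<Sum>i\<in>I. \<Sum>j\<in>I. if w i = w j then c i * cnj (c j) else 0)"
proof -
  have exp_term: "(c i * exp (\<i> * of_real (w i * t))) * cnj (c j * exp (\<i> * of_real (w j * t)))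
      = c i * cnj (c j) * exp (\<i> * of_real ((w i - w j) * t))" for i j t
  proof -
    have "exp (\<i> * of_real ((w i - w j) * t)) = exp (\<i> * of_real (w i * t)) * exp (- (\<i> * of_real (w j * t)))"
      by (simp add: algebra_simps flip: exp_add)
    moreover have "cnj (exp (\<i> * of_real (w j * t))) = exp (- (\<i> * of_real (w j * t)))"
      by (simp add: exp_cnj)
    ultimately show ?thesis
      by (simp add: mult_ac)
  qed
  have "(\<Sum>i\<in>I. c i * exp (\<i> * of_real (w i * t))) * cnj (\<Sum>i\<in>I. c i * exp (\<i> * of_real (w i * t)))
      = (\<Sum>ij\<in>I \<times> I. (c (fst ij) * cnj (c (snd ij))) * exp (\<i> * of_real ((w (fst ij) - w (snd ij)) * t)))"
    for t
    by (simp only: cnj_sum sum_product exp_term sum.cartesian_product split_def)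
  moreover have "(\<Sum>ij\<in>I \<times> I. if w (fst ij) - w (snd ij) = 0 then c (fst ij) * cnj (c (snd ij)) else 0)
      = (\<Sum>i\<in>I. \<Sum>j\<in>I. if w i = w j then c i * cnj (c j) else 0)"
    by (simp add: sum.cartesian_product split_def)
  ultimately show ?thesis
    using has_time_mean_exp_sum[of "I \<times> I" "\<lambda>ij. c (fst ij) * cnj (c (snd ij))"
        "\<lambda>ij. w (fst ij) - w (snd ij)"] assms by simp
qed

definition trig_sum :: "(real \<times> complex) list \<Rightarrow> real \<Rightarrow> complex" where
  "trig_sum xs t = (\<Sum>(w, c)\<leftarrow>xs. c * exp (\<i> * of_real (w * t)))"

definition trig_poly :: "(real \<Rightarrow> complex) \<Rightarrow> bool" where
  "trig_poly F \<longleftrightarrow> (\<exists>xs. F = trig_sum xs)"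

lemma trig_sum_Nil [simp]: "trig_sum [] t = 0"
  by (simp add: trig_sum_def)

lemma trig_sum_Cons [simp]: "trig_sum ((w, c) # xs) t = c * exp (\<i> * of_real (w * t)) + trig_sum xs t"
  by (simp add: trig_sum_def)

lemma trig_sum_append [simp]: "trig_sum (xs @ ys) t = trig_sum xs t + trig_sum ys t"
  by (simp add: trig_sum_def)

lemma trig_sum_mult:
  "trig_sum xs t * trig_sum ys t = trig_sum (concat (map (\<lambda>(w, c). map (\<lambda>(v, d). (w + v, c * d)) ys) xs)) t"
proof (induction xs)
  case (Cons x xs)
  have "trig_sum (map (\<lambda>(v, d). (w + v, c * d)) ys) t = c * exp (\<i> * of_real (w * t)) * trig_sum ys t"
    for w c
    by (induction ys) (auto simp: algebra_simps exp_add)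
  with Cons show ?case by (cases x) (simp add: algebra_simps)
qed simp

lemma trig_poly_const: "trig_poly (\<lambda>t. c)"
  unfolding trig_poly_def by (intro exI[of _ "[(0, c)]"]) (simp add: fun_eq_iff)

lemma trig_poly_add:
  assumes "trig_poly F" "trig_poly G"
  shows "trig_poly (\<lambda>t. F t + G t)"
proof -
  obtain xs ys where "F = trig_sum xs" "G = trig_sum ys"
    using assms unfolding trig_poly_def by blast
  then have "(\<lambda>t. F t + G t) = trig_sum (xs @ ys)"
    by (simp add: fun_eq_iff)
  then show ?thesis unfolding trig_poly_def by blast
qed

lemma trig_poly_mult: "trig_poly F \<Longrightarrow> trig_poly G \<Longrightarrow> trig_poly (\<lambda>t. F t * G t)"
  unfolding trig_poly_def by (auto simp: fun_eq_iff trig_sum_mult)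

lemma trig_poly_sum: "finite I \<Longrightarrow> (\<And>i. i \<in> I \<Longrightarrow> trig_poly (F i)) \<Longrightarrow> trig_poly (\<lambda>t. \<Sum>i\<in>I. F i t)"
  by (induction I rule: finite_induct) (auto intro: trig_poly_add trig_poly_const)

lemma trig_poly_exp_sum: "finite I \<Longrightarrow> trig_poly (\<lambda>t. \<Sum>i\<in>I. c i * exp (\<i> * of_real (w i * t)))"
  by (intro trig_poly_sum) (auto simp: trig_poly_def fun_eq_iff intro!: exI[of _ "[(w _, c _)]"])

lemma trig_poly_real_polynomial_function:
  assumes P: "real_polynomial_function P" and F: "trig_poly F" "\<And>t. F t \<in> \<real>"
  shows "trig_poly (\<lambda>t. of_real (P (Re (F t))))"
  using P
proof (induction P rule: real_polynomial_function.induct)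
  case (linear f)
  then obtain a where "f = (\<lambda>x. x * a)"
    using real_bounded_linear by blast
  with F have "(\<lambda>t. of_real (f (Re (F t)))) = (\<lambda>t. of_real a * F t)"
    by (auto simp: fun_eq_iff mult.commute)
  with F show ?case by (simp add: trig_poly_mult trig_poly_const)
next
  case (const c)
  then show ?case using trig_poly_const by simp
next
  case (add f g)
  then show ?case using trig_poly_add by fastforce
next
  case (mult f g)
  then show ?case using trig_poly_mult by fastforce
qed

lemma trig_sum_eq_exp_sum:
  "trig_sum xs = (\<lambda>t. \<Sum>i<length xs. snd (xs ! i) * exp (\<i> * of_real (fst (xs ! i) * t)))"
  by (simp add: fun_eq_iff trig_sum_def sum_list_sum_nth atLeast0LessThan case_prod_beta)

lemma trig_poly_continuous:
  assumes "trig_poly F"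
  shows "continuous_on UNIV F"
proof -
  obtain xs where "F = trig_sum xs"
    using assms unfolding trig_poly_def by blast
  moreover have "continuous_on UNIV (trig_sum xs)"
    unfolding trig_sum_eq_exp_sum by (intro continuous_intros)
  ultimately show ?thesis by simp
qed

lemma trig_poly_has_time_mean:
  assumes "trig_poly F"
  shows "\<exists>m. has_time_mean F m"
proof -
  obtain xs where "F = trig_sum xs"
    using assms unfolding trig_poly_def by blast
  then show ?thesis
    unfolding trig_sum_eq_exp_sum
    using has_time_mean_exp_sum[of "{..<length xs}" "\<lambda>i. snd (xs ! i)" "\<lambda>i. fst (xs ! i)"] by auto
qed

lemma trig_poly_compose_has_time_mean:
  fixes h :: "real \<Rightarrow> real"
  assumes F: "trig_poly F" "\<And>t. F t \<in> \<real>"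
    and S: "compact S" "\<And>t. Re (F t) \<in> S" and h: "continuous_on S h"
  shows "\<exists>m. has_time_mean (\<lambda>t. h (Re (F t))) m"
proof (rule has_time_mean_uniform_approx)
  have "continuous_on UNIV (\<lambda>t. Re (F t))"
    using trig_poly_continuous[OF F(1)] by (intro continuous_intros)
  then show "continuous_on UNIV (\<lambda>t. h (Re (F t)))"
    using S(2) by (intro continuous_on_compose2[OF h]) auto
  fix e :: real assume "e > 0"
  then obtain P where P: "real_polynomial_function P" "\<And>x. x \<in> S \<Longrightarrow> \<bar>h x - P x\<bar> < e"
    using Stone_Weierstrass_real_polynomial_function[OF S(1) h] by blast
  define G where "G t = complex_of_real (P (Re (F t)))" for t
  have G: "trig_poly G"
    unfolding G_def by (rule trig_poly_real_polynomial_function[OF P(1) F])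
  then obtain m where "has_time_mean G m"
    using trig_poly_has_time_mean by blast
  then have "has_time_mean (\<lambda>t. Re (G t)) (Re m)"
    by (rule has_time_mean_bounded_linear[OF bounded_linear_Re trig_poly_continuous[OF G]])
  moreover have "continuous_on UNIV (\<lambda>t. Re (G t))"
    using trig_poly_continuous[OF G] by (intro continuous_intros)
  moreover have "dist (h (Re (F t))) (Re (G t)) \<le> e" for t
    using P(2)[OF S(2)] by (simp add: G_def dist_real_def less_imp_le)
  ultimately show "\<exists>g m. continuous_on UNIV g \<and> has_time_mean g m \<and> (\<forall>t\<ge>0. dist (h (Re (F t))) (g t) \<le> e)"
    by blast
qed

lemma trig_poly_bounded:
  assumes "trig_poly F"
  obtains K where "\<And>t. norm (F t) \<le> K"
proof -
  obtain xs where F: "F = trig_sum xs"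
    using assms unfolding trig_poly_def by blast
  have "norm (trig_sum xs t) \<le> (\<Sum>(w, c)\<leftarrow>xs. norm c)" for t
  proof (induction xs)
    case (Cons x xs)
    then show ?case
      by (cases x) (auto simp: norm_mult intro!: order.trans[OF norm_triangle_ineq])
  qed simp
  with F that show ?thesis by blast
qed

section \<open>Quadratic forms on \<open>\<complex>\<^sup>D\<close>\<close>

definition orthonormal_basis :: "nat \<Rightarrow> (nat \<Rightarrow> cvec) \<Rightarrow> bool" where
  "orthonormal_basis D f \<longleftrightarrow> (\<forall>m<D. \<forall>n<D. cinner D (f m) (f n) = (if m = n then 1 else 0))"

lemma eigenbasis_imp_orthonormal_basis: "eigenbasis D A e E \<Longrightarrow> orthonormal_basis D e"
  by (simp add: eigenbasis_def orthonormal_basis_def)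

text \<open>Finite dimension enters here: a one-sided inverse of a square matrix is two-sided.\<close>
lemma orthonormal_basis_complete:
  assumes "orthonormal_basis D f" "i < D" "j < D"
  shows "(\<Sum>n<D. f n i * cnj (f n j)) = (if i = j then 1 else 0)"
proof -
  define A where "A = mat D D (\<lambda>(n, i). cnj (f n i))"
  define B where "B = mat D D (\<lambda>(i, n). f n i)"
  have AB: "A * B = 1\<^sub>m D"
    using assms(1) by (intro eq_matI) (auto simp: orthonormal_basis_def A_def B_def
        scalar_prod_def cinner_def lessThan_atLeast0)
  have "B * A = 1\<^sub>m D"
    by (rule mat_mult_left_right_inverse[OF _ _ AB]) (auto simp: A_def B_def)
  then have "(B * A) $$ (i, j) = 1\<^sub>m D $$ (i, j)"
    by simp
  with assms(2,3) show ?thesis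
    by (simp add: A_def B_def scalar_prod_def lessThan_atLeast0)
qed

lemma sum_swap_outermost:
  "(\<Sum>n\<in>A. \<Sum>j\<in>B. \<Sum>i\<in>C. f n j i) = (\<Sum>j\<in>B. \<Sum>i\<in>C. \<Sum>n\<in>A. f n j i)"
  by (subst sum.swap) (rule sum.cong[OF refl sum.swap])

lemma of_real_sum_cmod_square:
  "complex_of_real (\<Sum>i\<in>A. (cmod (f i))\<^sup>2) = (\<Sum>i\<in>A. f i * cnj (f i))"
  by (simp only: of_real_sum complex_norm_square)

lemma sum_cmod_square_eq_iff:
  "(\<Sum>i\<in>A. (cmod (f i))\<^sup>2) = (\<Sum>i\<in>B. (cmod (g i))\<^sup>2)
     \<longleftrightarrow> (\<Sum>i\<in>A. f i * cnj (f i)) = (\<Sum>i\<in>B. g i * cnj (g i))"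
  by (simp only: of_real_sum_cmod_square[symmetric] of_real_eq_iff)

lemma orthonormal_basis_parseval:
  assumes "orthonormal_basis D f"
  shows "(\<Sum>n<D. (cmod (cinner D (f n) w))\<^sup>2) = (\<Sum>i<D. (cmod (w i))\<^sup>2)"
proof -
  have "(\<Sum>n<D. cinner D (f n) w * cnj (cinner D (f n) w))
      = (\<Sum>n<D. \<Sum>j<D. \<Sum>i<D. (w i * cnj (w j)) * (f n j * cnj (f n i)))"
    by (simp add: cinner_def sum_distrib_left sum_distrib_right mult_ac)
  also have "\<dots> = (\<Sum>j<D. \<Sum>i<D. (w i * cnj (w j)) * (\<Sum>n<D. f n j * cnj (f n i)))"
    by (subst sum_swap_outermost) (simp add: sum_distrib_left)
  also have "\<dots> = (\<Sum>j<D. w j * cnj (w j))"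
    by (simp add: orthonormal_basis_complete[OF assms] if_distrib cong: if_cong)
  finally show ?thesis
    unfolding sum_cmod_square_eq_iff .
qed

lemma unitary_mat_norm_preserving:
  assumes "unitary_mat D V"
  shows "(\<Sum>i<D. (cmod (mvec D V v i))\<^sup>2) = (\<Sum>j<D. (cmod (v j))\<^sup>2)"
proof -
  have "(\<Sum>i<D. mvec D V v i * cnj (mvec D V v i))
      = (\<Sum>i<D. \<Sum>k<D. \<Sum>j<D. (v j * cnj (v k)) * (cnj (V i k) * V i j))"
    by (simp add: mvec_def sum_distrib_left sum_distrib_right mult_ac)
  also have "\<dots> = (\<Sum>k<D. \<Sum>j<D. (v j * cnj (v k)) * (\<Sum>i<D. cnj (V i k) * V i j))"
    by (subst sum_swap_outermost) (simp add: sum_distrib_left)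
  also have "\<dots> = (\<Sum>k<D. \<Sum>j<D. (v j * cnj (v k)) * (if k = j then 1 else 0))"
    using assms by (simp add: unitary_mat_def)
  also have "\<dots> = (\<Sum>k<D. v k * cnj (v k))"
    by (simp add: if_distrib cong: if_cong)
  finally show ?thesis
    unfolding sum_cmod_square_eq_iff .
qed

definition adjoint :: "cmat \<Rightarrow> cmat" where
  "adjoint A = (\<lambda>i j. cnj (A j i))"

lemma unitary_mat_adjoint: "unitary_mat D V \<Longrightarrow> unitary_mat D (adjoint V)"
  by (simp add: unitary_mat_def adjoint_def)

lemma melem_eq_sum: "melem D u A v = (\<Sum>i<D. \<Sum>j<D. cnj (u i) * A i j * v j)"
  by (simp add: melem_def cinner_def mvec_def sum_distrib_left mult_ac)

lemma melem_adjoint: "melem D u A v = cnj (melem D v (adjoint A) u)"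
proof -
  have "melem D u A v = (\<Sum>i<D. \<Sum>j<D. cnj (u i) * A i j * v j)"
    by (rule melem_eq_sum)
  also have "\<dots> = (\<Sum>j<D. \<Sum>i<D. cnj (u i) * A i j * v j)"
    by (rule sum.swap)
  also have "\<dots> = cnj (melem D v (adjoint A) u)"
    by (simp add: melem_eq_sum adjoint_def mult_ac)
  finally show ?thesis .
qed

lemma self_adjoint_entry: "self_adjoint D A \<Longrightarrow> i < D \<Longrightarrow> j < D \<Longrightarrow> A i j = cnj (A j i)"
  unfolding self_adjoint_def by blast

lemma self_adjoint_form_swap:
  assumes "self_adjoint D A"
  shows "(\<Sum>i<D. \<Sum>j<D. cnj (v i) * A i j * u j) = cnj (\<Sum>i<D. \<Sum>j<D. cnj (u i) * A i j * v j)"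
proof -
  have "(\<Sum>i<D. \<Sum>j<D. cnj (v i) * A i j * u j) = (\<Sum>i<D. \<Sum>j<D. cnj (cnj (u j) * A j i * v i))"
    by (intro sum.cong refl) (subst self_adjoint_entry[OF assms], auto)
  also have "\<dots> = cnj (\<Sum>i<D. \<Sum>j<D. cnj (u i) * A i j * v j)"
    by (subst (2) sum.swap) simp
  finally show ?thesis .
qed

lemma self_adjoint_melem: "self_adjoint D A \<Longrightarrow> melem D v A u = cnj (melem D u A v)"
  unfolding melem_eq_sum by (rule self_adjoint_form_swap)

lemma orthonormal_basis_norm:
  assumes "orthonormal_basis D f" "k < D"
  shows "(\<Sum>i<D. (cmod (f k i))\<^sup>2) = 1"
proof -
  have "(\<Sum>i<D. f k i * cnj (f k i)) = 1"
    using assms by (simp add: orthonormal_basis_def cinner_def mult.commute)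
  then have "complex_of_real (\<Sum>i<D. (cmod (f k i))\<^sup>2) = 1"
    by (simp only: of_real_sum_cmod_square)
  then show ?thesis
    by (simp only: of_real_eq_1_iff)
qed

lemma unitary_mat_transition_col_sum:
  assumes "orthonormal_basis D e" "orthonormal_basis D e'" "unitary_mat D V" "k < D"
  shows "(\<Sum>n<D. (cmod (melem D (e' n) V (e k)))\<^sup>2) = 1"
  using orthonormal_basis_parseval[OF assms(2)] unitary_mat_norm_preserving[OF assms(3)]
    orthonormal_basis_norm[OF assms(1,4)] by (simp add: melem_def)

lemma unitary_mat_transition_row_sum:
  assumes "orthonormal_basis D e" "orthonormal_basis D e'" "unitary_mat D V" "n < D"
  shows "(\<Sum>k<D. (cmod (melem D (e' n) V (e k)))\<^sup>2) = 1"
proof -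
  have "cmod (melem D (e' n) V (e k)) = cmod (cinner D (e k) (mvec D (adjoint V) (e' n)))" for k
    by (subst melem_adjoint) (simp add: melem_def)
  then show ?thesis
    using orthonormal_basis_parseval[OF assms(1)]
      unitary_mat_norm_preserving[OF unitary_mat_adjoint[OF assms(3)]] orthonormal_basis_norm[OF assms(2,4)]
    by simp
qed

lemma orthonormal_basis_trace:
  assumes "orthonormal_basis D e"
  shows "(\<Sum>k<D. melem D (e k) A (e k)) = (\<Sum>i<D. A i i)"
proof -
  have "(\<Sum>k<D. melem D (e k) A (e k)) = (\<Sum>k<D. \<Sum>i<D. \<Sum>j<D. A i j * (e k j * cnj (e k i)))"
    by (simp add: melem_def cinner_def mvec_def sum_distrib_left mult_ac)
  also have "\<dots> = (\<Sum>i<D. \<Sum>j<D. A i j * (\<Sum>k<D. e k j * cnj (e k i)))"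
    by (subst sum_swap_outermost) (simp add: sum_distrib_left)
  also have "\<dots> = (\<Sum>i<D. A i i)"
    by (simp add: orthonormal_basis_complete[OF assms] if_distrib cong: if_cong)
  finally show ?thesis .
qed

definition pos_semidef :: "nat \<Rightarrow> cmat \<Rightarrow> bool" where
  "pos_semidef D A \<longleftrightarrow> (\<forall>b. 0 \<le> Re (\<Sum>k<D. \<Sum>l<D. cnj (b k) * A k l * b l))"

lemma density_op_pos_semidef: "density_op D \<rho> \<Longrightarrow> pos_semidef D \<rho>"
  by (simp add: density_op_def pos_semidef_def flip: melem_eq_sum) (simp add: melem_def)

lemma cinner_lincomb_left:
  "cinner D (\<lambda>i. \<Sum>k<D. b k * f k i) w = (\<Sum>k<D. cnj (b k) * cinner D (f k) w)"
proof -
  have "cinner D (\<lambda>i. \<Sum>k<D. b k * f k i) w = (\<Sum>i<D. \<Sum>k<D. cnj (b k) * (cnj (f k i) * w i))"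
    by (simp add: cinner_def sum_distrib_left sum_distrib_right mult_ac)
  also have "\<dots> = (\<Sum>k<D. \<Sum>i<D. cnj (b k) * (cnj (f k i) * w i))"
    by (rule sum.swap)
  finally show ?thesis
    by (simp add: cinner_def sum_distrib_left)
qed

lemma cinner_lincomb_right:
  "cinner D u (\<lambda>i. \<Sum>l<D. b l * w l i) = (\<Sum>l<D. b l * cinner D u (w l))"
proof -
  have "cinner D u (\<lambda>i. \<Sum>l<D. b l * w l i) = (\<Sum>i<D. \<Sum>l<D. b l * (cnj (u i) * w l i))"
    by (simp add: cinner_def sum_distrib_left mult_ac)
  also have "\<dots> = (\<Sum>l<D. \<Sum>i<D. b l * (cnj (u i) * w l i))"
    by (rule sum.swap)
  finally show ?thesis
    by (simp add: cinner_def sum_distrib_left)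
qed

lemma mvec_lincomb: "mvec D A (\<lambda>j. \<Sum>l<D. b l * f l j) = (\<lambda>i. \<Sum>l<D. b l * mvec D A (f l) i)"
proof
  fix i
  have "mvec D A (\<lambda>j. \<Sum>l<D. b l * f l j) i = (\<Sum>j<D. \<Sum>l<D. b l * (A i j * f l j))"
    by (simp add: mvec_def sum_distrib_left mult_ac)
  also have "\<dots> = (\<Sum>l<D. \<Sum>j<D. b l * (A i j * f l j))"
    by (rule sum.swap)
  finally show "mvec D A (\<lambda>j. \<Sum>l<D. b l * f l j) i = (\<Sum>l<D. b l * mvec D A (f l) i)"
    by (simp add: mvec_def sum_distrib_left)
qed

lemma melem_lincomb:
  "melem D (\<lambda>i. \<Sum>k<D. b k * f k i) A (\<lambda>i. \<Sum>l<D. b l * f l i)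
     = (\<Sum>k<D. \<Sum>l<D. cnj (b k) * melem D (f k) A (f l) * b l)"
proof -
  have "melem D (\<lambda>i. \<Sum>k<D. b k * f k i) A (\<lambda>i. \<Sum>l<D. b l * f l i)
      = (\<Sum>k<D. cnj (b k) * cinner D (f k) (\<lambda>i. \<Sum>l<D. b l * mvec D A (f l) i))"
    by (simp only: melem_def mvec_lincomb cinner_lincomb_left)
  also have "\<dots> = (\<Sum>k<D. \<Sum>l<D. cnj (b k) * melem D (f k) A (f l) * b l)"
    by (simp add: cinner_lincomb_right melem_def sum_distrib_left mult_ac)
  finally show ?thesis .
qed

lemma pos_semidef_change_basis:
  assumes "pos_semidef D A"
  shows "pos_semidef D (\<lambda>k l. melem D (f k) A (f l))"
  unfolding pos_semidef_def
proof
  fix b :: cvec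
  define v where "v i = (\<Sum>k<D. b k * f k i)" for i
  have "(\<Sum>k<D. \<Sum>l<D. cnj (b k) * melem D (f k) A (f l) * b l) = melem D v A v"
    unfolding v_def by (rule melem_lincomb[symmetric])
  also have "\<dots> = (\<Sum>k<D. \<Sum>l<D. cnj (v k) * A k l * v l)"
    by (rule melem_eq_sum)
  finally show "0 \<le> Re (\<Sum>k<D. \<Sum>l<D. cnj (b k) * melem D (f k) A (f l) * b l)"
    using assms unfolding pos_semidef_def by simp
qed

lemma self_adjoint_change_basis:
  assumes "self_adjoint D A"
  shows "self_adjoint D (\<lambda>k l. melem D (f k) A (f l))"
  unfolding self_adjoint_def using self_adjoint_melem[OF assms] by blast

lemma self_adjoint_diag_real: "self_adjoint D A \<Longrightarrow> k < D \<Longrightarrow> A k k = of_real (Re (A k k))"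
  using self_adjoint_entry[of D A k k] by (metis Reals_cnj_iff of_real_Re)

lemma self_adjoint_form_real:
  assumes "self_adjoint D A"
  shows "(\<Sum>k<D. \<Sum>l<D. cnj (b k) * A k l * b l) \<in> \<real>"
  using self_adjoint_form_swap[OF assms, of b b] by (simp add: Reals_cnj_iff)

lemma quad_form_eq_support:
  fixes D :: nat and A :: cmat and b :: cvec
  assumes "S \<subseteq> {..<D}" "\<And>j. j \<notin> S \<Longrightarrow> b j = 0"
  shows "(\<Sum>i<D. \<Sum>j<D. cnj (b i) * A i j * b j) = (\<Sum>i\<in>S. \<Sum>j\<in>S. cnj (b i) * A i j * b j)"
proof -
  have "(\<Sum>j<D. cnj (b i) * A i j * b j) = (\<Sum>j\<in>S. cnj (b i) * A i j * b j)" for i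
    using assms by (intro sum.mono_neutral_right) auto
  then have "(\<Sum>i<D. \<Sum>j<D. cnj (b i) * A i j * b j) = (\<Sum>i<D. \<Sum>j\<in>S. cnj (b i) * A i j * b j)"
    by simp
  also have "\<dots> = (\<Sum>i\<in>S. \<Sum>j\<in>S. cnj (b i) * A i j * b j)"
    using assms by (intro sum.mono_neutral_right) auto
  finally show ?thesis .
qed

lemma pos_semidef_diag_nonneg:
  assumes "pos_semidef D A" "k < D"
  shows "0 \<le> Re (A k k)"
proof -
  define b :: cvec where "b j = (if j = k then 1 else 0)" for j
  have "(\<Sum>i<D. \<Sum>j<D. cnj (b i) * A i j * b j) = A k k"
    using assms(2) by (subst quad_form_eq_support[of "{k}"]) (auto simp: b_def)
  moreover have "0 \<le> Re (\<Sum>i<D. \<Sum>j<D. cnj (b i) * A i j * b j)"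
    using assms(1) unfolding pos_semidef_def by blast
  ultimately show ?thesis by simp
qed

lemma psd_2x2_norm_le:
  fixes a c :: real and z :: complex
  assumes form: "\<And>s t. 0 \<le> Re (cnj s * s * a + cnj s * t * z + cnj t * s * cnj z + cnj t * t * c)"
    and "a \<ge> 0" "c \<ge> 0"
  shows "(cmod z)\<^sup>2 \<le> a * c"
proof (cases "c > 0")
  case True
  have "0 \<le> Re (cnj (of_real c) * of_real c * a + cnj (of_real c) * (- cnj z) * z
      + cnj (- cnj z) * of_real c * cnj z + cnj (- cnj z) * (- cnj z) * c)"
    by (rule form)
  also have "\<dots> = c * (a * c - (cmod z)\<^sup>2)"
    by (simp add: cmod_power2[unfolded power2_eq_square] algebra_simps power2_eq_square)
  finally show ?thesis
    using True by (simp add: zero_le_mult_iff)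
next
  case False
  with assms(3) have "c = 0" by simp
  show ?thesis
  proof (rule ccontr)
    assume "\<not> ?thesis"
    with \<open>c = 0\<close> have z: "(cmod z)\<^sup>2 > 0" by simp
    \<comment> \<open>with \<open>c = 0\<close> the form is affine in \<open>t\<close>, so a large multiple of \<open>- cnj z\<close> makes it negative\<close>
    define lam where "lam = (a + 1) / (cmod z)\<^sup>2"
    have "0 \<le> Re (cnj 1 * 1 * a + cnj 1 * (- of_real lam * cnj z) * z
        + cnj (- of_real lam * cnj z) * 1 * cnj z + cnj (- of_real lam * cnj z) * (- of_real lam * cnj z) * c)"
      by (rule form)
    also have "\<dots> = a - 2 * lam * (cmod z)\<^sup>2"
      using \<open>c = 0\<close> by (simp add: cmod_power2[unfolded power2_eq_square] algebra_simps power2_eq_square)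
    also have "\<dots> = a - 2 * (a + 1)"
      using z by (simp add: lam_def)
    finally show False
      using assms(2) by simp
  qed
qed

lemma pos_semidef_norm_le:
  assumes sa: "self_adjoint D A" and psd: "pos_semidef D A" and kl: "k < D" "l < D"
  shows "(cmod (A k l))\<^sup>2 \<le> Re (A k k) * Re (A l l)"
proof (cases "k = l")
  case True
  have "cmod (A k k) = \<bar>Re (A k k)\<bar>"
    by (subst self_adjoint_diag_real[OF sa kl(1)]) (simp only: norm_of_real)
  with True show ?thesis
    by (simp add: power2_eq_square)
next
  case False
  show ?thesis
  proof (rule psd_2x2_norm_le)
    fix s t :: complex
    define b :: cvec where "b j = (if j = k then s else if j = l then t else 0)" for j
    have "(\<Sum>i<D. \<Sum>j<D. cnj (b i) * A i j * b j)
        = cnj s * s * A k k + cnj s * t * A k l + cnj t * s * A l k + cnj t * t * A l l"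
      using kl False by (subst quad_form_eq_support[of "{k, l}"]) (auto simp: b_def algebra_simps)
    moreover have "A l k = cnj (A k l)" "A k k = of_real (Re (A k k))" "A l l = of_real (Re (A l l))"
      using self_adjoint_entry[OF sa kl(2,1)] self_adjoint_diag_real[OF sa] kl by auto
    ultimately show "0 \<le> Re (cnj s * s * Re (A k k) + cnj s * t * A k l + cnj t * s * cnj (A k l)
        + cnj t * t * Re (A l l))"
      using psd[unfolded pos_semidef_def, rule_format, of b] by simp
  qed (use psd kl pos_semidef_diag_nonneg in auto)
qed

section \<open>Entropy inequalities\<close>

lemma continuous_on_xlnx: "continuous_on {0..} (\<lambda>x::real. x * ln x)"
  unfolding continuous_on_def
proof
  fix x :: real assume x: "x \<in> {0..}"
  show "((\<lambda>x. x * ln x) \<longlongrightarrow> x * ln x) (at x within {0..})"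
  proof (cases "x = 0")
    case True
    have "((\<lambda>x::real. x * ln x) \<longlongrightarrow> 0) (at_right 0)"
      by real_asymp
    with True show ?thesis
      by (simp add: at_within_Ici_at_right)
  next
    case False
    with x have "isCont (\<lambda>x. x * ln x) x"
      by (intro continuous_intros) auto
    then show ?thesis
      using continuous_at_imp_continuous_within[of x "\<lambda>x. x * ln x" "{0..}"]
      by (simp add: continuous_within)
  qed
qed

lemma xlnx_ge_tangent:
  fixes y q :: real
  assumes "y \<ge> 0" "q > 0"
  shows "y * ln q + y - q \<le> y * ln y"
proof (cases "y = 0")
  case False
  with assms have "y * ln (q / y) \<le> y * (q / y - 1)"
    by (intro mult_left_mono ln_le_minus_one) auto
  with False assms show ?thesis
    by (simp add: ln_divide_pos algebra_simps)
qed (use assms in simp)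

lemma xlnx_le_quadratic:
  fixes y q :: real
  assumes "y \<ge> 0" "q > 0"
  shows "y * ln y \<le> (ln q - 1) * y + y\<^sup>2 / q"
proof (cases "y = 0")
  case False
  with assms have "y * ln (y / q) \<le> y * (y / q - 1)"
    by (intro mult_left_mono ln_le_minus_one) auto
  with False assms show ?thesis
    by (simp add: ln_divide_pos algebra_simps power2_eq_square)
qed (use assms in simp)

lemma doubly_stochastic_xlnx_sum_le:
  fixes W :: "nat \<Rightarrow> nat \<Rightarrow> real" and x :: "nat \<Rightarrow> real"
  assumes W: "\<And>n k. 0 \<le> W n k"
    and rows: "\<And>n. n < D \<Longrightarrow> (\<Sum>k<D. W n k) = 1"
    and cols: "\<And>k. k < D \<Longrightarrow> (\<Sum>n<D. W n k) = 1"
    and x: "\<And>k. k < D \<Longrightarrow> 0 \<le> x k"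
  shows "(\<Sum>n<D. (\<Sum>k<D. W n k * x k) * ln (\<Sum>k<D. W n k * x k)) \<le> (\<Sum>k<D. x k * ln (x k))"
proof -
  have row_bound: "q * ln q \<le> (\<Sum>k<D. W n k * (x k * ln (x k)))"
    if n: "n < D" and q: "q = (\<Sum>k<D. W n k * x k)" for n q
  proof (cases "q > 0")
    case True
    have "(\<Sum>k<D. W n k * (x k * ln q + x k - q))
        = (\<Sum>k<D. W n k * x k) * ln q + (\<Sum>k<D. W n k * x k) - q * (\<Sum>k<D. W n k)"
      by (simp add: algebra_simps sum.distrib sum_subtractf sum_distrib_left sum_distrib_right)
    then have "q * ln q = (\<Sum>k<D. W n k * (x k * ln q + x k - q))"
      using rows[OF n] by (simp add: q)
    also have "\<dots> \<le> (\<Sum>k<D. W n k * (x k * ln (x k)))"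
      using True x W by (intro sum_mono mult_left_mono xlnx_ge_tangent) auto
    finally show ?thesis .
  next
    case False
    have nonneg: "\<forall>k\<in>{..<D}. 0 \<le> W n k * x k"
      using W x by simp
    then have "q = 0"
      using False sum_nonneg[of "{..<D}" "\<lambda>k. W n k * x k", OF nonneg[rule_format]]
      unfolding q by linarith
    have zero: "W n k * x k = 0" if "k < D" for k
    proof -
      have "0 \<le> W n k * x k" "W n k * x k \<le> q"
        using that nonneg unfolding q by (auto intro: member_le_sum)
      with \<open>q = 0\<close> show ?thesis by linarith
    qed
    have "(\<Sum>k<D. W n k * (x k * ln (x k))) = 0"
      by (intro sum.neutral) (simp add: zero mult.assoc[symmetric])
    with \<open>q = 0\<close> show ?thesis by simp
  qed
  have "(\<Sum>n<D. (\<Sum>k<D. W n k * x k) * ln (\<Sum>k<D. W n k * x k))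
      \<le> (\<Sum>n<D. \<Sum>k<D. W n k * (x k * ln (x k)))"
    by (intro sum_mono row_bound) auto
  also have "\<dots> = (\<Sum>k<D. x k * ln (x k))"
    by (subst sum.swap) (simp add: cols flip: sum_distrib_right)
  finally show ?thesis .
qed

text \<open>Average \<open>xlnx_le_quadratic\<close> at \<open>q\<close>; the case \<open>q = 0\<close> uses the parabola at \<open>1\<close> instead.\<close>
lemma has_time_mean_xlnx_le:
  fixes f :: "real \<Rightarrow> real"
  assumes f: "continuous_on UNIV f" "\<And>t. 0 \<le> f t"
    and mean: "has_time_mean f q" and square: "has_time_mean (\<lambda>t. (f t)\<^sup>2) m2" "m2 \<le> 2 * q\<^sup>2"
    and xlnx: "has_time_mean (\<lambda>t. f t * ln (f t)) m"
  shows "m \<le> q * ln q + q"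
proof -
  have "0 \<le> q"
    using f by (intro has_time_mean_le[OF _ _ has_time_mean_const mean]) auto
  define r where "r = (if q > 0 then q else 1)"
  have r: "r > 0" "q > 0 \<Longrightarrow> r = q" "q = 0 \<Longrightarrow> r = 1"
    using \<open>0 \<le> q\<close> by (auto simp: r_def)
  have "continuous_on UNIV (\<lambda>t. (ln r - 1) * f t)" "continuous_on UNIV (\<lambda>t. (f t)\<^sup>2 / r)"
    using f(1) r(1) by (auto intro!: continuous_intros)
  moreover have "has_time_mean (\<lambda>t. (f t)\<^sup>2 / r) (m2 / r)"
    using has_time_mean_mult_left[OF square(1), of "1 / r"] by simp
  ultimately have bound: "has_time_mean (\<lambda>t. (ln r - 1) * f t + (f t)\<^sup>2 / r) ((ln r - 1) * q + m2 / r)"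
    by (intro has_time_mean_add has_time_mean_mult_left mean)
  have "m \<le> (ln r - 1) * q + m2 / r"
  proof (rule has_time_mean_le[OF _ _ xlnx bound])
    show "continuous_on UNIV (\<lambda>t. f t * ln (f t))"
      using f by (intro continuous_on_compose2[OF continuous_on_xlnx]) auto
    show "continuous_on UNIV (\<lambda>t. (ln r - 1) * f t + (f t)\<^sup>2 / r)"
      using f(1) r(1) by (auto intro!: continuous_intros)
    show "f t * ln (f t) \<le> (ln r - 1) * f t + (f t)\<^sup>2 / r" for t
      using xlnx_le_quadratic[OF f(2) r(1)] .
  qed
  also have "\<dots> \<le> q * ln q + q"
  proof (cases "q > 0")
    case True
    then have "m2 / r \<le> 2 * q"
      using r(2) square(2) by (simp add: divide_le_eq power2_eq_square)
    with True r(2) show ?thesis by (simp add: algebra_simps)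
  next
    case False
    with \<open>0 \<le> q\<close> r(3) square(2) show ?thesis by simp
  qed
  finally show ?thesis .
qed

lemma Limsup_bounded_divide_le_0:
  assumes "\<And>N. N \<ge> 1 \<Longrightarrow> f N \<le> C"
  shows "Limsup sequentially (\<lambda>N. ereal (f N / real N)) \<le> 0"
proof -
  have "\<forall>\<^sub>F N in sequentially. ereal (f N / real N) \<le> ereal (C / real N)"
    using eventually_ge_at_top[of "1::nat"]
    by eventually_elim (use assms in \<open>simp add: divide_right_mono\<close>)
  then have "Limsup sequentially (\<lambda>N. ereal (f N / real N))
      \<le> Limsup sequentially (\<lambda>N. ereal (C / real N))"
    by (rule Limsup_mono)
  also have "\<dots> = 0"
    by (simp add: lim_imp_Limsup lim_const_over_n zero_ereal_def)
  finally show ?thesis .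
qed

section \<open>The diagonal entropy after the operation\<close>

text \<open>\<open>rho0\<close> and \<open>U\<close> are the matrices \<open>\<rho>\<^sup>0\<^sub>k\<^sub>l\<close> and \<open>U\<^sub>n\<^sub>k\<close>, \<open>pop n \<tau>\<close> is \<open>\<rho>'\<^sub>n\<^sub>n(\<tau>)\<close>, and \<open>pbar n\<close> will turn
  out to be its time average.\<close>
locale quench =
  fixes D :: nat and rho V :: cmat and e e' :: "nat \<Rightarrow> cvec" and E :: "nat \<Rightarrow> real" and hbar :: real
  assumes hbar_pos: "hbar > 0"
    and density: "density_op D rho"
    and unitary: "unitary_mat D V"
    and onb: "orthonormal_basis D e"
    and onb': "orthonormal_basis D e'"
    and nondeg: "nondegenerate D E"
    and gaps: "nondegenerate_gaps D E"
begin

definition rho0 :: cmat where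
  "rho0 k l = melem D (e k) rho (e l)"

definition U :: cmat where
  "U n k = melem D (e' n) V (e k)"

definition p0 :: "nat \<Rightarrow> real" where
  "p0 k = Re (rho0 k k)"

definition W :: "nat \<Rightarrow> nat \<Rightarrow> real" where
  "W n k = (cmod (U n k))\<^sup>2"

definition pbar :: "nat \<Rightarrow> real" where
  "pbar n = (\<Sum>k<D. W n k * p0 k)"

definition pop :: "nat \<Rightarrow> real \<Rightarrow> complex" where
  "pop n \<tau> = (\<Sum>k<D. \<Sum>l<D. U n k * cnj (U n l)
               * exp (- \<i> * complex_of_real ((E k - E l) * \<tau> / hbar)) * rho0 k l)"

definition pairs :: "(nat \<times> nat) set" where
  "pairs = {..<D} \<times> {..<D}"

definition diag_pairs :: "(nat \<times> nat) set" where
  "diag_pairs = (\<lambda>k. (k, k)) ` {..<D}"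

definition amp :: "nat \<Rightarrow> nat \<times> nat \<Rightarrow> complex" where
  "amp n = (\<lambda>(k, l). U n k * cnj (U n l) * rho0 k l)"

definition freq :: "nat \<times> nat \<Rightarrow> real" where
  "freq = (\<lambda>(k, l). (E l - E k) / hbar)"

lemma rho0_self_adjoint: "self_adjoint D rho0"
  using density unfolding rho0_def[abs_def] density_op_def by (simp add: self_adjoint_change_basis)

lemma rho0_pos_semidef: "pos_semidef D rho0"
  unfolding rho0_def[abs_def] by (intro pos_semidef_change_basis density_op_pos_semidef density)

lemma p0_nonneg: "k < D \<Longrightarrow> 0 \<le> p0 k"
  unfolding p0_def by (rule pos_semidef_diag_nonneg[OF rho0_pos_semidef])

lemma rho0_diag: "k < D \<Longrightarrow> rho0 k k = of_real (p0 k)"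
  unfolding p0_def by (rule self_adjoint_diag_real[OF rho0_self_adjoint])

lemma sum_p0: "(\<Sum>k<D. p0 k) = 1"
proof -
  have "(\<Sum>k<D. rho0 k k) = 1"
    using density orthonormal_basis_trace[OF onb] by (simp add: rho0_def density_op_def)
  then show ?thesis
    by (simp add: p0_def flip: Re_sum)
qed

lemma W_nonneg: "0 \<le> W n k"
  by (simp add: W_def)

lemma W_row_sum: "n < D \<Longrightarrow> (\<Sum>k<D. W n k) = 1"
  unfolding W_def U_def by (rule unitary_mat_transition_row_sum[OF onb onb' unitary])

lemma W_col_sum: "k < D \<Longrightarrow> (\<Sum>n<D. W n k) = 1"
  unfolding W_def U_def by (rule unitary_mat_transition_col_sum[OF onb onb' unitary])

lemma sum_pbar: "(\<Sum>n<D. pbar n) = 1"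
  unfolding pbar_def by (subst sum.swap) (simp add: W_col_sum sum_p0 flip: sum_distrib_right)

definition phase :: "nat \<Rightarrow> real \<Rightarrow> cvec" where
  "phase n \<tau> l = cnj (U n l) * exp (\<i> * of_real (E l * \<tau> / hbar))"

lemma pop_eq_form: "pop n \<tau> = (\<Sum>k<D. \<Sum>l<D. cnj (phase n \<tau> k) * rho0 k l * phase n \<tau> l)"
proof -
  have "exp (- \<i> * of_real ((E k - E l) * \<tau> / hbar))
      = cnj (exp (\<i> * of_real (E k * \<tau> / hbar))) * exp (\<i> * of_real (E l * \<tau> / hbar))" for k l
    by (simp add: exp_cnj algebra_simps diff_divide_distrib flip: exp_add)
  then show ?thesis
    unfolding pop_def phase_def by (intro sum.cong refl) (simp add: mult_ac)
qed

lemma pop_real: "pop n \<tau> = of_real (Re (pop n \<tau>))"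
proof -
  have "pop n \<tau> \<in> \<real>"
    unfolding pop_eq_form by (rule self_adjoint_form_real[OF rho0_self_adjoint])
  then show ?thesis
    by (rule of_real_Re[symmetric])
qed

lemma pop_nonneg: "0 \<le> Re (pop n \<tau>)"
  using rho0_pos_semidef unfolding pop_eq_form pos_semidef_def by blast

lemma pop_exp_sum: "pop n = (\<lambda>\<tau>. \<Sum>i\<in>pairs. amp n i * exp (\<i> * of_real (freq i * \<tau>)))"
proof
  fix \<tau>
  have "- \<i> * of_real ((E k - E l) * \<tau> / hbar) = \<i> * of_real (freq (k, l) * \<tau>)" for k l
    by (simp add: freq_def algebra_simps)
  then have "pop n \<tau> = (\<Sum>k<D. \<Sum>l<D. amp n (k, l) * exp (\<i> * of_real (freq (k, l) * \<tau>)))"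
    unfolding pop_def by (intro sum.cong refl) (simp add: amp_def mult_ac)
  then show "pop n \<tau> = (\<Sum>i\<in>pairs. amp n i * exp (\<i> * of_real (freq i * \<tau>)))"
    by (simp add: pairs_def sum.cartesian_product)
qed

lemma pop_trig_poly: "trig_poly (pop n)"
  unfolding pop_exp_sum by (rule trig_poly_exp_sum) (simp add: pairs_def)

lemma pop_continuous: "continuous_on UNIV (\<lambda>\<tau>. Re (pop n \<tau>))"
  using trig_poly_continuous[OF pop_trig_poly] by (intro continuous_intros)

text \<open>This is where assumptions (A) and (B) enter.\<close>
lemma freq_eq_iff:
  assumes "i \<in> pairs" "j \<in> pairs"
  shows "freq i = freq j \<longleftrightarrow> i = j \<or> (i \<in> diag_pairs \<and> j \<in> diag_pairs)"
proof -
  obtain k l k' l' where ij: "i = (k, l)" "j = (k', l')" "k < D" "l < D" "k' < D" "l' < D"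
    using assms by (auto simp: pairs_def)
  have "freq i = freq j \<longleftrightarrow> E l - E k = E l' - E k'"
    using hbar_pos by (auto simp: freq_def ij divide_cancel_right)
  also have "\<dots> \<longleftrightarrow> i = j \<or> (k = l \<and> k' = l')"
  proof (cases "E l - E k = 0")
    case True
    then show ?thesis
      using nondeg ij by (auto simp: nondegenerate_def inj_on_def)
  next
    case False
    then show ?thesis
      using gaps ij unfolding nondegenerate_gaps_def by fastforce
  qed
  also have "\<dots> \<longleftrightarrow> i = j \<or> (i \<in> diag_pairs \<and> j \<in> diag_pairs)"
    using ij by (auto simp: diag_pairs_def)
  finally show ?thesis .
qed

lemma diag_pairs_subset: "diag_pairs \<subseteq> pairs"
  by (auto simp: diag_pairs_def pairs_def)

lemma sum_diag_pairs: "(\<Sum>i\<in>diag_pairs. f i) = (\<Sum>k<D. f (k, k))"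
  unfolding diag_pairs_def by (subst sum.reindex) (auto simp: inj_on_def)

lemma freq_eq_0_iff: "i \<in> pairs \<Longrightarrow> freq i = 0 \<longleftrightarrow> i \<in> diag_pairs"
  using hbar_pos nondeg by (auto simp: pairs_def diag_pairs_def freq_def nondegenerate_def inj_on_def)

lemma sum_amp_diag: "(\<Sum>i\<in>diag_pairs. amp n i) = of_real (pbar n)"
  by (simp add: sum_diag_pairs amp_def pbar_def rho0_diag W_def mult_ac flip: complex_norm_square)

lemma rho0_norm_le: "k < D \<Longrightarrow> l < D \<Longrightarrow> (cmod (rho0 k l))\<^sup>2 \<le> p0 k * p0 l"
  unfolding p0_def by (rule pos_semidef_norm_le[OF rho0_self_adjoint rho0_pos_semidef])

lemma amp_norm_le:
  assumes "i \<in> pairs"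
  shows "(cmod (amp n i))\<^sup>2 \<le> (W n (fst i) * p0 (fst i)) * (W n (snd i) * p0 (snd i))"
proof -
  obtain k l where i: "i = (k, l)" "k < D" "l < D"
    using assms by (auto simp: pairs_def)
  have "(cmod (amp n i))\<^sup>2 = W n k * W n l * (cmod (rho0 k l))\<^sup>2"
    by (simp add: i amp_def W_def norm_mult power_mult_distrib)
  also have "\<dots> \<le> W n k * W n l * (p0 k * p0 l)"
    using i by (intro mult_left_mono rho0_norm_le) (auto simp: W_nonneg)
  finally show ?thesis
    by (simp add: i mult_ac)
qed

lemma has_time_mean_pop: "has_time_mean (\<lambda>\<tau>. Re (pop n \<tau>)) (pbar n)"
proof -
  have "has_time_mean (pop n) (\<Sum>i\<in>pairs. if freq i = 0 then amp n i else 0)"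
    unfolding pop_exp_sum by (rule has_time_mean_exp_sum) (simp add: pairs_def)
  also have "(\<Sum>i\<in>pairs. if freq i = 0 then amp n i else 0) = of_real (pbar n)"
    using diag_pairs_subset
    by (simp add: freq_eq_0_iff sum.inter_restrict[symmetric] Int_absorb1 sum_amp_diag
        pairs_def cong: if_cong)
  finally show ?thesis
    using has_time_mean_bounded_linear[OF bounded_linear_Re trig_poly_continuous[OF pop_trig_poly]]
    by fastforce
qed

lemma has_time_mean_pop_square:
  "\<exists>m2. has_time_mean (\<lambda>\<tau>. (Re (pop n \<tau>))\<^sup>2) m2 \<and> m2 \<le> 2 * (pbar n)\<^sup>2"
proof -
  define off where "off = (\<Sum>i\<in>pairs - diag_pairs. (cmod (amp n i))\<^sup>2)"
  have "has_time_mean (\<lambda>\<tau>. pop n \<tau> * cnj (pop n \<tau>))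
          (\<Sum>i\<in>pairs. \<Sum>j\<in>pairs. if freq i = freq j then amp n i * cnj (amp n j) else 0)"
    unfolding pop_exp_sum by (rule has_time_mean_exp_sum_norm_sq) (simp add: pairs_def)
  also have "(\<Sum>i\<in>pairs. \<Sum>j\<in>pairs. if freq i = freq j then amp n i * cnj (amp n j) else 0)
      = (\<Sum>i\<in>diag_pairs. amp n i) * cnj (\<Sum>j\<in>diag_pairs. amp n j)
        + (\<Sum>i\<in>pairs - diag_pairs. amp n i * cnj (amp n i))"
    by (subst sum_sum_if_eq_class[OF _ diag_pairs_subset freq_eq_iff]) (simp_all add: pairs_def sum_product)
  also have "\<dots> = of_real ((pbar n)\<^sup>2 + off)"
    by (simp add: sum_amp_diag power2_eq_square off_def flip: of_real_sum_cmod_square)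
  finally have mean: "has_time_mean (\<lambda>\<tau>. Re (pop n \<tau> * cnj (pop n \<tau>))) (Re (of_real ((pbar n)\<^sup>2 + off)))"
    using trig_poly_continuous[OF pop_trig_poly]
    by (intro has_time_mean_bounded_linear[OF bounded_linear_Re]) (auto intro!: continuous_intros)
  have square: "(\<lambda>\<tau>. Re (pop n \<tau> * cnj (pop n \<tau>))) = (\<lambda>\<tau>. (Re (pop n \<tau>))\<^sup>2)"
    by (rule ext, subst (1 2) pop_real) (simp add: power2_eq_square)
  have "off \<le> (pbar n)\<^sup>2"
  proof -
    have "off \<le> (\<Sum>i\<in>pairs. (cmod (amp n i))\<^sup>2)"
      unfolding off_def by (rule sum_mono2) (auto simp: pairs_def)
    also have "\<dots> \<le> (\<Sum>i\<in>pairs. (W n (fst i) * p0 (fst i)) * (W n (snd i) * p0 (snd i)))"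
      by (intro sum_mono amp_norm_le)
    also have "\<dots> = (pbar n)\<^sup>2"
      by (simp add: pairs_def pbar_def sum.cartesian_product power2_eq_square sum_product split_def)
    finally show ?thesis .
  qed
  with mean[unfolded square Re_complex_of_real] show ?thesis
    by (intro exI[of _ "(pbar n)\<^sup>2 + off"]) simp
qed

lemma has_time_mean_pop_xlnx:
  "\<exists>m. has_time_mean (\<lambda>\<tau>. Re (pop n \<tau>) * ln (Re (pop n \<tau>))) m \<and> m \<le> pbar n * ln (pbar n) + pbar n"
proof -
  obtain K where K: "\<And>\<tau>. norm (pop n \<tau>) \<le> K"
    using trig_poly_bounded[OF pop_trig_poly] by blast
  have range: "Re (pop n \<tau>) \<in> {0..K}" for \<tau>
    using pop_nonneg complex_Re_le_cmod[of "pop n \<tau>"] K[of \<tau>] by auto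
  have real: "pop n \<tau> \<in> \<real>" for \<tau>
    by (subst pop_real) (rule Reals_of_real)
  have "continuous_on {0..K} (\<lambda>x::real. x * ln x)"
    by (rule continuous_on_subset[OF continuous_on_xlnx]) auto
  then obtain m where m: "has_time_mean (\<lambda>\<tau>. Re (pop n \<tau>) * ln (Re (pop n \<tau>))) m"
    using trig_poly_compose_has_time_mean[OF pop_trig_poly real compact_Icc range] by blast
  obtain m2 where "has_time_mean (\<lambda>\<tau>. (Re (pop n \<tau>))\<^sup>2) m2" "m2 \<le> 2 * (pbar n)\<^sup>2"
    using has_time_mean_pop_square by blast
  with m have "m \<le> pbar n * ln (pbar n) + pbar n"
    by (intro has_time_mean_xlnx_le[OF pop_continuous pop_nonneg has_time_mean_pop])
  with m show ?thesis by blast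
qed

lemma entropy_deficit_le_1:
  "diag_entropy D p0 - time_avg (\<lambda>\<tau>. diag_entropy D (\<lambda>n. Re (pop n \<tau>))) \<le> 1"
proof -
  obtain m where m: "\<And>n. has_time_mean (\<lambda>\<tau>. Re (pop n \<tau>) * ln (Re (pop n \<tau>))) (m n)"
      and m_le: "\<And>n. m n \<le> pbar n * ln (pbar n) + pbar n"
    using has_time_mean_pop_xlnx by metis
  have "continuous_on UNIV (\<lambda>\<tau>. Re (pop n \<tau>) * ln (Re (pop n \<tau>)))" for n
    using pop_continuous pop_nonneg by (intro continuous_on_compose2[OF continuous_on_xlnx]) auto
  then have "has_time_mean (\<lambda>\<tau>. -1 * (\<Sum>n<D. Re (pop n \<tau>) * ln (Re (pop n \<tau>)))) (-1 * (\<Sum>n<D. m n))"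
    by (intro has_time_mean_mult_left has_time_mean_sum m) auto
  then have "time_avg (\<lambda>\<tau>. diag_entropy D (\<lambda>n. Re (pop n \<tau>))) = - (\<Sum>n<D. m n)"
    by (intro time_avg_eqI) (simp add: diag_entropy_def)
  moreover have "(\<Sum>n<D. m n) \<le> (\<Sum>n<D. pbar n * ln (pbar n)) + 1"
    using sum_mono[of "{..<D}" m, OF m_le] by (simp add: sum.distrib sum_pbar)
  moreover have "(\<Sum>n<D. pbar n * ln (pbar n)) \<le> (\<Sum>k<D. p0 k * ln (p0 k))"
    unfolding pbar_def by (rule doubly_stochastic_xlnx_sum_le[OF W_nonneg W_row_sum W_col_sum p0_nonneg])
  ultimately show ?thesis
    by (simp add: diag_entropy_def)
qed

end

theorem corollary1:
  fixes d :: nat and hbar :: real and c :: real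
    and H H' rho V :: "nat \<Rightarrow> cmat"
    and e e' :: "nat \<Rightarrow> nat \<Rightarrow> cvec"
    and E E' :: "nat \<Rightarrow> nat \<Rightarrow> real"
  assumes d2: "d \<ge> 2"
    and hbar: "hbar > 0"
    and sa_H: "\<And>N. N \<ge> 1 \<Longrightarrow> self_adjoint (d ^ N) (H N)"
    and sa_H': "\<And>N. N \<ge> 1 \<Longrightarrow> self_adjoint (d ^ N) (H' N)"
    and dens: "\<And>N. N \<ge> 1 \<Longrightarrow> density_op (d ^ N) (rho N)"
    and unit: "\<And>N. N \<ge> 1 \<Longrightarrow> unitary_mat (d ^ N) (V N)"
    and eb: "\<And>N. N \<ge> 1 \<Longrightarrow> eigenbasis (d ^ N) (H N) (e N) (E N)"
    and eb': "\<And>N. N \<ge> 1 \<Longrightarrow> eigenbasis (d ^ N) (H' N) (e' N) (E' N)"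
    and A: "\<And>N. N \<ge> 1 \<Longrightarrow> nondegenerate (d ^ N) (E N) \<and> nondegenerate (d ^ N) (E' N)"
    and B: "\<And>N. N \<ge> 1 \<Longrightarrow> nondegenerate_gaps (d ^ N) (E N) \<and> nondegenerate_gaps (d ^ N) (E' N)"
    and c: "c > 0"
    and Deff: "\<And>N. N \<ge> 1 \<Longrightarrow>
        1 / (\<Sum>n<d ^ N. (Re (melem (d ^ N) (e N n) (rho N) (e N n)))\<^sup>2) \<ge> exp (c * real N)"
  shows "Limsup sequentially (\<lambda>N. ereal
     ((diag_entropy (d ^ N) (\<lambda>n. Re (melem (d ^ N) (e N n) (rho N) (e N n)))
       - time_avg (\<lambda>\<tau>. diag_entropy (d ^ N) (\<lambda>n. Re (\<Sum>k<d ^ N. \<Sum>l<d ^ N.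
            melem (d ^ N) (e' N n) (V N) (e N k) * cnj (melem (d ^ N) (e' N n) (V N) (e N l))
            * exp (- \<i> * complex_of_real ((E N k - E N l) * \<tau> / hbar))
            * melem (d ^ N) (e N k) (rho N) (e N l)))))
      / real N)) \<le> 0"
proof (rule Limsup_bounded_divide_le_0[where C = 1], goal_cases)
  case (1 N)
  interpret quench "d ^ N" "rho N" "V N" "e N" "e' N" "E N" hbar
    using hbar dens[OF 1] unit[OF 1] eb[OF 1] eb'[OF 1] A[OF 1] B[OF 1]
    by unfold_locales (auto intro: eigenbasis_imp_orthonormal_basis)
  show ?case
    using entropy_deficit_le_1 unfolding p0_def[abs_def] rho0_def pop_def U_def .
qed

end
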